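(* Let $k\ge2$ be an integer. Then for all $n\in\mathbb Z$, $L_k^{(n)}L_k^{(-n)}=H$, where $H=(L_k^{(0)})^2$.
   Context: Fix an integer $k\ge2$. Let $Q_k$ be the $k\times k$ matrix whose first row is all ones, with $(Q_k)_{i+1,i}=1$ for $1\le i\le k-1$ and all other entries $0$, and for $r\in\mathbb Z$ let $Q_k^r$ denote its $r$-th power. The generalized Lucas sequence of order $k$, $(l_{k,n})_{n\in\mathbb Z}$, is the two-sided sequence satisfying $l_{k,n+k}=l_{k,n+k-1}+\dots+l_{k,n}$ for all $n\in\mathbb Z$ with initial values $l_{k,r}=\operatorname{trace}(Q_k^r)$ for $0\le r\le k-1$ (so $l_{k,0}=k$ and $l_{k,r}=2^r-1$ for $1\le r\le k-1$). For $n\in\mathbb Z$ the generalized Lucas matrix $L_k^{(n)}$ is the $k\times k$ matrix with entries $(L_k^{(n)})_{i,1}=l_{k,k+n-i}$ and $(L_k^{(n)})_{i,j}=\sum_{m=n-i+j-1}^{k+n-i-1} l_{k,m}$ for $2\le j\le k$, $1\le i\le k$. *)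

theory Defs
  imports "Jordan_Normal_Form.Matrix"
begin

text \<open>The generalized Lucas sequence of order k, two-sided (indexed by int):
  the unique sequence satisfying l(n+k) = l(n+k-1) + ... + l(n) for all integers n,
  with l(0) = k and l(r) = 2^r - 1 for 1 \<le> r \<le> k-1 (these are trace(Q_k^r)).\<close>
definition lucas_seq :: "nat \<Rightarrow> int \<Rightarrow> int" where
  "lucas_seq k = (THE f. (\<forall>n. f (n + int k) = (\<Sum>j<k. f (n + int j)))
                        \<and> f 0 = int k
                        \<and> (\<forall>r. 1 \<le> r \<and> r < k \<longrightarrow> f (int r) = 2 ^ r - 1))"

text \<open>The generalized Lucas matrix L_k^(n), with 0-based indices i' = i-1, j' = j-1:
  entry (i',0) = l(k+n-i'-1); entry (i',j') for j' \<ge> 1 is the sum of l(m)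
  for m from n-i'+j'-1 to k+n-i'-2.\<close>
definition lucas_mat :: "nat \<Rightarrow> int \<Rightarrow> int mat" where
  "lucas_mat k n = mat k k (\<lambda>(i, j).
     if j = 0 then lucas_seq k (int k + n - int i - 1)
     else (\<Sum>m\<in>{n - int i + int j - 1 .. int k + n - int i - 2}. lucas_seq k m))"

end

theory Submission
  imports Defs
begin

text \<open>Write L(n) for the Lucas matrix and Q for the companion matrix Q_k. Then
  L(n) Q = Q L(n) = L(n+1), hence L(n+1) L(-n-1) = L(n) Q L(-n-1) = L(n) L(-n), so the
  product does not depend on n. Both shift identities hold for the matrices built from any
  two-sided solution of the recurrence, once the first column is also written as a sum of
  consecutive terms, which the recurrence allows. The initial values only matter to see
  that the sequence defined by THE is such a solution: a solution is determined by k
  consecutive values, and every choice of k initial values extends to one.\<close>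

definition kbonacci_rec :: "nat \<Rightarrow> (int \<Rightarrow> int) \<Rightarrow> bool" where
  "kbonacci_rec k f \<longleftrightarrow> (\<forall>n. f (n + int k) = (\<Sum>j<k. f (n + int j)))"

lemma kbonacci_rec_step:
  assumes "kbonacci_rec k f" and "k \<ge> 1"
  shows "f (n + int k) = f n + (\<Sum>j = 1..<k. f (n + int j))"
  using assms by (simp add: kbonacci_rec_def lessThan_atLeast0 sum.atLeast_Suc_lessThan)

lemma kbonacci_rec_sum_reverse:
  assumes "kbonacci_rec k f"
  shows "(\<Sum>r<k. f (a - int r)) = f (a + 1)"
proof -
  have "(\<Sum>r<k. f (a - int r)) = (\<Sum>r<k. f (a + 1 - int k + int (k - Suc r)))"
    by (intro sum.cong refl) auto
  also have "\<dots> = (\<Sum>r<k. f (a + 1 - int k + int r))"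
    by (rule sum.nat_diff_reindex)
  also have "\<dots> = f (a + 1)"
    using assms unfolding kbonacci_rec_def by (metis diff_add_cancel)
  finally show ?thesis .
qed

lemma kbonacci_rec_window_shift:
  assumes f: "kbonacci_rec k f" and g: "kbonacci_rec k g" and k: "k \<ge> 1"
  shows "(\<forall>m\<in>{a..<a + int k}. f m = g m) \<longleftrightarrow> (\<forall>m\<in>{a + 1..<a + 1 + int k}. f m = g m)"
proof -
  let ?inner = "\<forall>m\<in>{a + 1..<a + int k}. f m = g m"
  have "{a..<a + int k} = insert a {a + 1..<a + int k}"
    "{a + 1..<a + 1 + int k} = insert (a + int k) {a + 1..<a + int k}"
    using k by auto
  moreover have "?inner \<Longrightarrow> f a = g a \<longleftrightarrow> f (a + int k) = g (a + int k)"
    using kbonacci_rec_step[OF f k, of a] kbonacci_rec_step[OF g k, of a] by simp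
  ultimately show ?thesis by auto
qed

lemma kbonacci_rec_eqI:
  assumes f: "kbonacci_rec k f" and g: "kbonacci_rec k g" and k: "k \<ge> 1"
    and initial: "\<And>j. j < k \<Longrightarrow> f (int j) = g (int j)"
  shows "f = g"
proof
  fix n
  have "\<forall>m\<in>{a..<a + int k}. f m = g m" for a
  proof (induction a rule: int_induct[where k = 0])
    case base
    show ?case
    proof
      fix m assume "m \<in> {0..<0 + int k}"
      then show "f m = g m" using initial[of "nat m"] by (simp add: nat_less_iff)
    qed
  next
    case (step1 a)
    then show ?case using kbonacci_rec_window_shift[OF f g k] by blast
  next
    case (step2 a)
    then show ?case using kbonacci_rec_window_shift[OF f g k, of "a - 1"] by simp
  qed
  then show "f n = g n"
    using k by fastforce
qed

text \<open>For negative n the recurrence is solved for its lowest term; the measure puts all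
  negative indices above the initial window 0, ..., k - 1.\<close>

function kbonacci_seq :: "nat \<Rightarrow> (nat \<Rightarrow> int) \<Rightarrow> int \<Rightarrow> int" where
  "kbonacci_seq k w n =
     (if n < 0 \<and> k > 0
      then kbonacci_seq k w (n + int k) - (\<Sum>j = 1..<k. kbonacci_seq k w (n + int j))
      else if n < int k then w (nat n)
      else (\<Sum>j<k. kbonacci_seq k w (n - int k + int j)))"
  by auto
termination
  by (relation "measure (\<lambda>(k, w, n). if n < 0 then k + nat (- n) else nat n)") auto

declare kbonacci_seq.simps [simp del]

lemma kbonacci_seq_initial: "j < k \<Longrightarrow> kbonacci_seq k w (int j) = w j"
  by (simp add: kbonacci_seq.simps)

lemma kbonacci_rec_kbonacci_seq:
  assumes "k \<ge> 1"
  shows "kbonacci_rec k (kbonacci_seq k w)"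
  unfolding kbonacci_rec_def
proof
  fix n
  show "kbonacci_seq k w (n + int k) = (\<Sum>j<k. kbonacci_seq k w (n + int j))"
  proof (cases "n < 0")
    case True
    then show ?thesis
      using assms by (simp add: kbonacci_seq.simps[of k w n] lessThan_atLeast0 sum.atLeast_Suc_lessThan)
  next
    case False
    then show ?thesis
      by (simp add: kbonacci_seq.simps[of k w "n + int k"])
  qed
qed

lemma kbonacci_rec_lucas_seq:
  assumes "k \<ge> 1"
  shows "kbonacci_rec k (lucas_seq k)"
proof -
  define P where "P f \<longleftrightarrow> kbonacci_rec k f \<and> f 0 = int k
    \<and> (\<forall>r. 1 \<le> r \<and> r < k \<longrightarrow> f (int r) = 2 ^ r - 1)" for f
  define w where "w r = (if r = 0 then int k else 2 ^ r - 1)" for r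
  have "P (kbonacci_seq k w)"
    using assms kbonacci_seq_initial[of 0 k w]
    by (simp add: P_def w_def kbonacci_rec_kbonacci_seq kbonacci_seq_initial)
  moreover have "f = kbonacci_seq k w" if "P f" for f
  proof (rule kbonacci_rec_eqI[OF _ _ assms])
    show "kbonacci_rec k f" "kbonacci_rec k (kbonacci_seq k w)"
      using that assms by (simp_all add: P_def kbonacci_rec_kbonacci_seq)
    show "f (int j) = kbonacci_seq k w (int j)" if "j < k" for j
      using \<open>P f\<close> that kbonacci_seq_initial[of 0 k w]
      by (cases "j = 0") (simp_all add: P_def w_def kbonacci_seq_initial)
  qed
  ultimately have "P (THE f. P f)"
    by (rule theI)
  moreover have "lucas_seq k = (THE f. P f)"
    by (simp add: lucas_seq_def P_def kbonacci_rec_def)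
  ultimately show ?thesis
    by (simp add: P_def)
qed

definition tail_sum :: "nat \<Rightarrow> (int \<Rightarrow> int) \<Rightarrow> int \<Rightarrow> nat \<Rightarrow> int" where
  "tail_sum k l u j = (\<Sum>s = j..<k. l (u + int s))"

lemma sum_int_interval_eq_tail_sum:
  "(\<Sum>m = u + int j..u + int k - 1. l m) = tail_sum k l u j"
  unfolding tail_sum_def
  by (rule sum.reindex_bij_witness[where i = "\<lambda>s. u + int s" and j = "\<lambda>m. nat (m - u)"]) auto

lemma tail_sum_0:
  assumes "kbonacci_rec k l"
  shows "tail_sum k l u 0 = l (u + int k)"
  using assms by (simp add: kbonacci_rec_def tail_sum_def atLeast0LessThan)

lemma tail_sum_shift:
  assumes "kbonacci_rec k l" and "j < k"
  shows "tail_sum k l (u + 1) j = tail_sum k l u 0 + tail_sum k l u (Suc j)"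
proof -
  have "tail_sum k l (u + 1) j = (\<Sum>s = Suc j..<Suc k. l (u + int s))"
    unfolding tail_sum_def sum.shift_bounds_Suc_ivl by (simp add: algebra_simps)
  also have "\<dots> = tail_sum k l u (Suc j) + l (u + int k)"
    using assms(2) by (simp add: tail_sum_def sum.atLeastLessThan_Suc)
  finally show ?thesis
    using tail_sum_0[OF assms(1)] by simp
qed

lemma sum_tail_sum:
  assumes "kbonacci_rec k l"
  shows "(\<Sum>r<k. tail_sum k l (u - int r) j) = tail_sum k l (u + 1) j"
proof -
  have "(\<Sum>r<k. tail_sum k l (u - int r) j) = (\<Sum>s = j..<k. \<Sum>r<k. l (u + int s - int r))"
    unfolding tail_sum_def by (subst sum.swap) (simp add: algebra_simps)
  also have "\<dots> = tail_sum k l (u + 1) j"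
    unfolding tail_sum_def kbonacci_rec_sum_reverse[OF assms] by (simp add: algebra_simps)
  finally show ?thesis .
qed

text \<open>With 0-based indices, entry (i, j) of L(n) is l(n-i+j-1) + ... + l(n-i+k-2) also for j = 0,
  where the definition has l(n-i+k-1) instead (see \<open>lucas_mat_eq_seq_mat\<close>).\<close>

definition seq_mat :: "nat \<Rightarrow> (int \<Rightarrow> int) \<Rightarrow> int \<Rightarrow> int mat" where
  "seq_mat k l n = mat k k (\<lambda>(i, j). tail_sum k l (n - int i - 1) j)"

definition companion_mat :: "nat \<Rightarrow> int mat" where
  "companion_mat k = mat k k (\<lambda>(i, j). of_bool (i = 0 \<or> i = Suc j))"

lemma sum_first_and_succ:
  fixes e :: "nat \<Rightarrow> int"
  assumes "j < k"
  shows "(\<Sum>r = 0..<k. e r * of_bool (r = 0 \<or> r = Suc j))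
    = e 0 + (if Suc j < k then e (Suc j) else 0)"
proof -
  have "(\<Sum>r = 0..<k. e r * of_bool (r = 0 \<or> r = Suc j)) = sum e ({0..<k} \<inter> {r. r = 0 \<or> r = Suc j})"
    by (rule sum_mult_of_bool_eq) simp
  also have "{0..<k} \<inter> {r. r = 0 \<or> r = Suc j} = (if Suc j < k then {0, Suc j} else {0})"
    using assms by auto
  finally show ?thesis by simp
qed

lemma sum_first_or_pred:
  fixes e :: "nat \<Rightarrow> int"
  assumes "i < k"
  shows "(\<Sum>r = 0..<k. of_bool (i = 0 \<or> i = Suc r) * e r)
    = (if i = 0 then (\<Sum>r<k. e r) else e (i - 1))"
proof -
  have "(\<Sum>r = 0..<k. of_bool (i = 0 \<or> i = Suc r) * e r) = sum e ({0..<k} \<inter> {r. i = 0 \<or> i = Suc r})"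
    by (rule sum_of_bool_mult_eq) simp
  also have "{0..<k} \<inter> {r. i = 0 \<or> i = Suc r} = (if i = 0 then {..<k} else {i - 1})"
    using assms by auto
  finally show ?thesis by simp
qed

lemma seq_mat_carrier [simp]: "seq_mat k l n \<in> carrier_mat k k"
  by (simp add: seq_mat_def)

lemma companion_mat_carrier [simp]: "companion_mat k \<in> carrier_mat k k"
  by (simp add: companion_mat_def)

lemma lucas_mat_eq_seq_mat:
  assumes "k \<ge> 1"
  shows "lucas_mat k n = seq_mat k (lucas_seq k) n"
proof (rule eq_matI)
  fix i j assume "i < dim_row (seq_mat k (lucas_seq k) n)" "j < dim_col (seq_mat k (lucas_seq k) n)"
  then have ij: "i < k" "j < k" by (simp_all add: seq_mat_def)
  have "lucas_seq k (int k + n - int i - 1) = tail_sum k (lucas_seq k) (n - int i - 1) 0"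
    using tail_sum_0[OF kbonacci_rec_lucas_seq[OF assms]] by (simp add: algebra_simps)
  moreover have "(\<Sum>m = n - int i + int j - 1..int k + n - int i - 2. lucas_seq k m)
      = tail_sum k (lucas_seq k) (n - int i - 1) j"
    using sum_int_interval_eq_tail_sum[where u = "n - int i - 1" and j = j]
    by (simp add: algebra_simps)
  ultimately show "lucas_mat k n $$ (i, j) = seq_mat k (lucas_seq k) n $$ (i, j)"
    using ij by (simp add: lucas_mat_def seq_mat_def)
qed (simp_all add: lucas_mat_def seq_mat_def)

lemma seq_mat_mult_companion:
  assumes "kbonacci_rec k l"
  shows "seq_mat k l n * companion_mat k = seq_mat k l (n + 1)"
proof (rule eq_matI)
  fix i j assume "i < dim_row (seq_mat k l (n + 1))" "j < dim_col (seq_mat k l (n + 1))"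
  then have ij: "i < k" "j < k" by (simp_all add: seq_mat_def)
  let ?e = "tail_sum k l (n - int i - 1)"
  have "(seq_mat k l n * companion_mat k) $$ (i, j) = (\<Sum>r = 0..<k. ?e r * of_bool (r = 0 \<or> r = Suc j))"
    using ij by (simp add: seq_mat_def companion_mat_def scalar_prod_def)
  also have "\<dots> = ?e 0 + ?e (Suc j)"
    using sum_first_and_succ[OF ij(2), of ?e] by (cases "Suc j < k") (simp_all add: tail_sum_def)
  also have "\<dots> = seq_mat k l (n + 1) $$ (i, j)"
    using ij tail_sum_shift[OF assms ij(2), of "n - int i - 1"] by (simp add: seq_mat_def)
  finally show "(seq_mat k l n * companion_mat k) $$ (i, j) = seq_mat k l (n + 1) $$ (i, j)" .
qed (simp_all add: seq_mat_def companion_mat_def)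

lemma companion_mult_seq_mat:
  assumes "kbonacci_rec k l"
  shows "companion_mat k * seq_mat k l n = seq_mat k l (n + 1)"
proof (rule eq_matI)
  fix i j assume "i < dim_row (seq_mat k l (n + 1))" "j < dim_col (seq_mat k l (n + 1))"
  then have ij: "i < k" "j < k" by (simp_all add: seq_mat_def)
  let ?e = "\<lambda>r. tail_sum k l (n - 1 - int r) j"
  have "(companion_mat k * seq_mat k l n) $$ (i, j) = (\<Sum>r = 0..<k. of_bool (i = 0 \<or> i = Suc r) * ?e r)"
    using ij by (simp add: seq_mat_def companion_mat_def scalar_prod_def algebra_simps)
  also have "\<dots> = (if i = 0 then (\<Sum>r<k. ?e r) else ?e (i - 1))"
    by (rule sum_first_or_pred[OF ij(1)])
  also have "\<dots> = seq_mat k l (n + 1) $$ (i, j)"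
    using ij sum_tail_sum[OF assms, of "n - 1" j] by (simp add: seq_mat_def)
  finally show "(companion_mat k * seq_mat k l n) $$ (i, j) = seq_mat k l (n + 1) $$ (i, j)" .
qed (simp_all add: seq_mat_def companion_mat_def)

lemma seq_mat_mult_neg_succ:
  assumes "kbonacci_rec k l"
  shows "seq_mat k l (n + 1) * seq_mat k l (- (n + 1)) = seq_mat k l n * seq_mat k l (- n)"
proof -
  have "seq_mat k l (n + 1) * seq_mat k l (- (n + 1))
      = seq_mat k l n * companion_mat k * seq_mat k l (- n - 1)"
    by (simp add: seq_mat_mult_companion[OF assms])
  also have "\<dots> = seq_mat k l n * (companion_mat k * seq_mat k l (- n - 1))"
    by (rule assoc_mult_mat[OF seq_mat_carrier companion_mat_carrier seq_mat_carrier])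
  also have "\<dots> = seq_mat k l n * seq_mat k l (- n)"
    by (simp add: companion_mult_seq_mat[OF assms])
  finally show ?thesis .
qed

lemma seq_mat_mult_neg:
  assumes "kbonacci_rec k l"
  shows "seq_mat k l n * seq_mat k l (- n) = seq_mat k l 0 * seq_mat k l 0"
proof (induction n rule: int_induct[where k = 0])
  case (step1 i)
  then show ?case
    using seq_mat_mult_neg_succ[OF assms, of i] by simp
next
  case (step2 i)
  then show ?case
    using seq_mat_mult_neg_succ[OF assms, of "i - 1"] by simp
qed simp

theorem theorem6:
  fixes k :: nat and n :: int
  assumes "k \<ge> 2"
  shows "lucas_mat k n * lucas_mat k (- n) = lucas_mat k 0 * lucas_mat k 0"
proof -
  have k: "k \<ge> 1"
    using assms by simp
  show ?thesis
    unfolding lucas_mat_eq_seq_mat[OF k]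
    by (rule seq_mat_mult_neg[OF kbonacci_rec_lucas_seq[OF k]])
qed

end
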